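(* Let $n,d$ be positive integers, $\mathbf{c}\in\mathbb{Z}^n_+$, and $\mathbb{P}\subseteq[0,d]^n$ a bounded polyhedron with $\mathbb{P}\cap\mathbb{Z}^n\ne\emptyset$. Let $a_1=d$ and $a_k=d(1+\sum_{j=1}^{k-1}a_j)$ for $k\in\{2,\dots,n\}$. Consider the following cutting plane algorithm. Set $L_0=\{\mathbf{z}=(z_0,\dots,z_n)\in\mathbb{R}^{n+1}: (z_1,\dots,z_n)\in\mathbb{P},\ z_0=\sum_{i=1}^n c_iz_i\}$. At iteration $t=0,1,2,\dots$, let $\mathbf{z}_t^\star$ be a lexicographically maximum element of $L_t$; if $\mathbf{z}_t^\star$ is integral, stop; otherwise let $k=\min\{j: (\mathbf{z}^\star_t)_j\notin\mathbb{Z}\}$ and set $L_{t+1}=L_t\cap\{\mathbf{z}: z_k+\sum_{j=0}^{k-1}a_{k-j}(z_j-\lceil(\mathbf{z}_t^\star)_j\rceil)\le\lfloor(\mathbf{z}_t^\star)_k\rfloor\}$. If $\mathbf{z}_t^\star$ and $\mathbf{z}_{t+1}^\star$ are both not integral, then $\alpha(\mathbf{z}_{t+1}^\star)<_L\alpha(\mathbf{z}_t^\star)$.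
   Context: Lexicographic order on $\mathbb{R}^{n+1}$: $\mathbf{x}<_L\mathbf{y}$ if there is $k\in\{0,\dots,n\}$ with $x_k<y_k$ and $x_i=y_i$ for all $i<k$; $\mathbf{x}\le_L\mathbf{y}$ means $\mathbf{x}<_L\mathbf{y}$ or $\mathbf{x}=\mathbf{y}$. A lexicographically maximum element of a set $T$ is some $\mathbf{t}\in T$ with $\mathbf{s}\le_L\mathbf{t}$ for all $\mathbf{s}\in T$. For a non-integral $\mathbf{y}=(y_0,\dots,y_n)\in\mathbb{R}\times[0,d]^n$, $\alpha(\mathbf{y})$ is the integral vector with $\alpha(\mathbf{y})_i=\lfloor y_i\rfloor$ for $i\le k$ and $\alpha(\mathbf{y})_i=d$ for $i>k$, where $k=\min\{j: y_j\notin\mathbb{Z}\}$. In the algorithm, the cut added at each iteration is the one of index $k$ (the first non-integral coordinate) among the $n+1$ inequalities $z_i+\sum_{j=0}^{i-1}a_{i-j}(z_j-\lceil (\mathbf{z}_t^\star)_j\rceil)\le\lfloor(\mathbf{z}_t^\star)_i\rfloor$, $i=0,\dots,n$; this is the paper's standing assumption that the learned cut selection policy selects this cut. *)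

theory Defs
  imports Main Complex_Main
begin

text \<open>Vectors of R^(n+1) are encoded as functions nat => real, coordinates 0..n
  being the meaningful ones.\<close>

definition lex_less :: "nat \<Rightarrow> (nat \<Rightarrow> real) \<Rightarrow> (nat \<Rightarrow> real) \<Rightarrow> bool" where
  "lex_less n x y \<longleftrightarrow> (\<exists>k\<le>n. x k < y k \<and> (\<forall>i<k. x i = y i))"

definition lex_le :: "nat \<Rightarrow> (nat \<Rightarrow> real) \<Rightarrow> (nat \<Rightarrow> real) \<Rightarrow> bool" where
  "lex_le n x y \<longleftrightarrow> lex_less n x y \<or> (\<forall>i\<le>n. x i = y i)"

definition is_lexmax :: "nat \<Rightarrow> (nat \<Rightarrow> real) set \<Rightarrow> (nat \<Rightarrow> real) \<Rightarrow> bool" where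
  "is_lexmax n T t \<longleftrightarrow> t \<in> T \<and> (\<forall>s\<in>T. lex_le n s t)"

definition integral_vec :: "nat \<Rightarrow> (nat \<Rightarrow> real) \<Rightarrow> bool" where
  "integral_vec n y \<longleftrightarrow> (\<forall>i\<le>n. y i \<in> \<int>)"

definition first_nonint :: "(nat \<Rightarrow> real) \<Rightarrow> nat" where
  "first_nonint y = (LEAST j. y j \<notin> \<int>)"

definition alpha :: "nat \<Rightarrow> nat \<Rightarrow> (nat \<Rightarrow> real) \<Rightarrow> (nat \<Rightarrow> real)" where
  "alpha d n y = (\<lambda>i. if i \<le> first_nonint y then of_int \<lfloor>y i\<rfloor>
                       else if i \<le> n then real d else 0)"

definition cut_set :: "(nat \<Rightarrow> real) \<Rightarrow> nat \<Rightarrow> (nat \<Rightarrow> real) \<Rightarrow> (nat \<Rightarrow> real) set" where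
  "cut_set a k zs = {z. z k + (\<Sum>j<k. a (k - j) * (z j - of_int \<lceil>zs j\<rceil>)) \<le> of_int \<lfloor>zs k\<rfloor>}"

end

theory Submission
  imports Defs
begin

text \<open>Let \<open>w\<close> be the current lexicographic maximum, \<open>k\<close> its first fractional coordinate, and
  \<open>z\<close> the next maximum, so \<open>z \<le>\<^sub>L w\<close> and \<open>z\<close> satisfies the cut of index \<open>k\<close>. If \<open>z\<close> drops
  below \<open>w\<close> at a coordinate \<open>p < k\<close>, where \<open>w\<close> is integral, then \<open>\<lfloor>z\<^sub>p\<rfloor> < w\<^sub>p\<close> and \<open>\<alpha>\<close>
  already drops at \<open>p\<close>. Otherwise \<open>z\<close> agrees with \<open>w\<close> before \<open>k\<close>, the weighted sum of the cut
  vanishes, and the cut reads \<open>z\<^sub>k \<le> \<lfloor>w\<^sub>k\<rfloor>\<close>. If this is strict, \<open>\<alpha>\<close> drops at \<open>k\<close>; if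
  it is an equality, \<open>z\<close> is integral up to \<open>k\<close>, so its first fractional coordinate lies
  beyond \<open>k\<close>, where \<open>\<alpha>(w)\<close> is the constant \<open>d\<close>. Since \<open>z \<le> d\<close> there, \<open>\<alpha>(z) \<le> \<alpha>(w)\<close>
  componentwise, strictly at that fractional coordinate. The cut coefficients \<open>a\<close> play no
  role: the cut is only invoked where its weighted sum vanishes.\<close>

lemma first_nonint_le:
  assumes "\<not> integral_vec n y"
  shows "first_nonint y \<le> n"
  using assms Least_le[of "\<lambda>j. y j \<notin> \<int>"] unfolding integral_vec_def first_nonint_def
  by (meson le_trans)

lemma nonint_at_first_nonint:
  assumes "\<not> integral_vec n y"
  shows "y (first_nonint y) \<notin> \<int>"
  using assms LeastI[of "\<lambda>j. y j \<notin> \<int>"] unfolding integral_vec_def first_nonint_def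
  by blast

lemma Ints_below_first_nonint: "i < first_nonint y \<Longrightarrow> y i \<in> \<int>"
  unfolding first_nonint_def using not_less_Least by blast

lemma le_first_nonint:
  assumes "\<not> integral_vec n y" and "\<forall>i<q. y i \<in> \<int>"
  shows "q \<le> first_nonint y"
  using assms nonint_at_first_nonint not_le by blast

lemma alpha_upto_first_nonint: "i \<le> first_nonint y \<Longrightarrow> alpha d n y i = \<lfloor>y i\<rfloor>"
  unfolding alpha_def by simp

lemma alpha_after_first_nonint: "first_nonint y < i \<Longrightarrow> i \<le> n \<Longrightarrow> alpha d n y i = real d"
  unfolding alpha_def by simp

lemma lex_less_of_le_of_ne:
  assumes le: "\<forall>i\<le>n. u i \<le> v i" and ne: "\<exists>i\<le>n. u i \<noteq> v i"
  shows "lex_less n u v"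
proof -
  obtain q where q: "q \<le> n" "u q \<noteq> v q" and below: "\<forall>i<q. \<not> (i \<le> n \<and> u i \<noteq> v i)"
    using ne exists_least_iff[of "\<lambda>i. i \<le> n \<and> u i \<noteq> v i"] by blast
  have "u q < v q" using le q by (simp add: order_le_neq_trans)
  moreover have "\<forall>i<q. u i = v i" using below q(1) by auto
  ultimately show ?thesis unfolding lex_less_def using q(1) by blast
qed

lemma mem_cut_set_of_eq_below:
  assumes "\<forall>i<k. z i = w i" and "\<forall>i<k. w i \<in> \<int>"
  shows "z \<in> cut_set a k w \<longleftrightarrow> z k \<le> \<lfloor>w k\<rfloor>"
proof -
  have "(\<Sum>j<k. a (k - j) * (z j - \<lceil>w j\<rceil>)) = 0"
    using assms by (intro sum.neutral) (auto simp: of_int_ceiling)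
  then show ?thesis unfolding cut_set_def by simp
qed

lemma lex_less_alpha_of_floor_less:
  assumes nw: "\<not> integral_vec n w" and nz: "\<not> integral_vec n z"
    and qw: "q \<le> first_nonint w" and eq: "\<forall>i<q. z i = w i"
    and less: "\<lfloor>z q\<rfloor> < \<lfloor>w q\<rfloor>"
  shows "lex_less n (alpha d n z) (alpha d n w)"
proof -
  have "\<forall>i<q. z i \<in> \<int>" using eq qw Ints_below_first_nonint by fastforce
  then have qz: "q \<le> first_nonint z" using le_first_nonint nz by blast
  have "alpha d n z q < alpha d n w q"
    using less qw qz by (simp add: alpha_upto_first_nonint)
  moreover have "\<forall>i<q. alpha d n z i = alpha d n w i"
    using eq qw qz by (simp add: alpha_upto_first_nonint)
  moreover have "q \<le> n" using qw first_nonint_le[OF nw] by simp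
  ultimately show ?thesis unfolding lex_less_def by blast
qed

lemma lex_less_alpha_of_integral_at_first_nonint:
  assumes nz: "\<not> integral_vec n z"
    and k: "k = first_nonint w" and eq: "\<forall>i<k. z i = w i" and zk: "z k = \<lfloor>w k\<rfloor>"
    and bound: "\<forall>j\<in>{1..n}. z j \<le> real d"
  shows "lex_less n (alpha d n z) (alpha d n w)"
proof -
  define k' where "k' = first_nonint z"
  have "\<forall>i<Suc k. z i \<in> \<int>"
    using eq zk k Ints_below_first_nonint by (metis Ints_of_int less_Suc_eq)
  then have kk': "k < k'" using le_first_nonint[OF nz, of "Suc k"] k'_def by simp
  have k'n: "k' \<le> n" using first_nonint_le[OF nz] k'_def by simp
  have below_d: "\<lfloor>z i\<rfloor> \<le> real d" if "k < i" "i \<le> n" for i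
  proof -
    have "z i \<le> real d" using bound that by simp
    then show ?thesis using of_int_floor_le[of "z i"] by linarith
  qed
  have "z k' \<noteq> real d" using nonint_at_first_nonint[OF nz] k'_def by auto
  moreover have "z k' \<le> real d" using bound kk' k'n by simp
  ultimately have "\<lfloor>z k'\<rfloor> < real d" using of_int_floor_le[of "z k'"] by linarith
  then have "alpha d n z k' \<noteq> alpha d n w k'"
    using kk' k'n k k'_def by (simp add: alpha_upto_first_nonint alpha_after_first_nonint)
  moreover have "alpha d n z i \<le> alpha d n w i" if "i \<le> n" for i
  proof (cases "k < i")
    case True
    then show ?thesis using below_d[OF True that] that k k'_def
      by (cases "i \<le> k'") (simp_all add: alpha_upto_first_nonint alpha_after_first_nonint)
  next
    case False
    then have "\<lfloor>z i\<rfloor> = \<lfloor>w i\<rfloor>" using eq zk by (cases "i = k") auto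
    then show ?thesis using False kk' k k'_def by (simp add: alpha_upto_first_nonint)
  qed
  ultimately show ?thesis using k'n by (intro lex_less_of_le_of_ne) auto
qed

lemma lex_less_alpha_after_cut:
  assumes nz: "\<not> integral_vec n z" and nw: "\<not> integral_vec n w"
    and le: "lex_le n z w"
    and cut: "z \<in> cut_set a (first_nonint w) w"
    and bound: "\<forall>j\<in>{1..n}. z j \<le> real d"
  shows "lex_less n (alpha d n z) (alpha d n w)"
proof -
  define k where "k = first_nonint w"
  have kn: "k \<le> n" and wk: "w k \<notin> \<int>" and w_below: "\<forall>i<k. w i \<in> \<int>"
    using first_nonint_le[OF nw] nonint_at_first_nonint[OF nw] Ints_below_first_nonint
    unfolding k_def by auto
  have cut_iff: "z \<in> cut_set a k w \<longleftrightarrow> z k \<le> \<lfloor>w k\<rfloor>" if "\<forall>i<k. z i = w i"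
    using mem_cut_set_of_eq_below[OF that w_below] .
  have "\<not> (\<forall>i\<le>n. z i = w i)"
  proof
    assume "\<forall>i\<le>n. z i = w i"
    then have "w k \<le> \<lfloor>w k\<rfloor>" using cut cut_iff kn k_def by auto
    then show False using wk of_int_floor_le[of "w k"] by (metis Ints_of_int antisym)
  qed
  with le obtain p where p: "p \<le> n" "z p < w p" and eq_p: "\<forall>i<p. z i = w i"
    unfolding lex_le_def lex_less_def by auto
  show ?thesis
  proof (cases "p < k")
    case True
    then have "\<lfloor>z p\<rfloor> < \<lfloor>w p\<rfloor>" using p(2) w_below by (simp add: floor_less_iff)
    then show ?thesis
      using lex_less_alpha_of_floor_less[OF nw nz _ eq_p] True k_def by simp
  next
    case False
    then have eq_k: "\<forall>i<k. z i = w i" using eq_p by simp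
    then have zk: "z k \<le> \<lfloor>w k\<rfloor>" using cut cut_iff k_def by blast
    show ?thesis
    proof (cases "z k < \<lfloor>w k\<rfloor>")
      case True
      then show ?thesis using lex_less_alpha_of_floor_less[OF nw nz _ eq_k] k_def
        by (simp add: floor_less_iff)
    next
      case False
      then show ?thesis using lex_less_alpha_of_integral_at_first_nonint[OF nz k_def eq_k _ bound] zk
        by simp
    qed
  qed
qed

theorem lemma2:
  fixes n d m :: nat
    and c :: "nat \<Rightarrow> int"
    and A :: "nat \<Rightarrow> nat \<Rightarrow> real" and b :: "nat \<Rightarrow> real"
    and P :: "(nat \<Rightarrow> real) set"
    and a :: "nat \<Rightarrow> real"
    and L :: "nat \<Rightarrow> (nat \<Rightarrow> real) set"
    and zs :: "nat \<Rightarrow> (nat \<Rightarrow> real)"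
    and t :: nat
  assumes n_pos: "n > 0" and d_pos: "d > 0"
    and c_nonneg: "\<forall>i\<in>{1..n}. c i \<ge> 0"
    and P_def: "P = {x. \<forall>i<m. (\<Sum>j=1..n. A i j * x j) \<le> b i}"
    and P_box: "\<forall>x\<in>P. \<forall>j\<in>{1..n}. 0 \<le> x j \<and> x j \<le> real d"
    and P_int: "\<exists>x\<in>P. \<forall>j\<in>{1..n}. x j \<in> \<int>"
    and a1: "a 1 = real d"
    and ak: "\<forall>k\<in>{2..n}. a k = real d * (1 + (\<Sum>j=1..<k. a j))"
    and L0: "L 0 = {z. z \<in> P \<and> z 0 = (\<Sum>i=1..n. of_int (c i) * z i) \<and> (\<forall>j>n. z j = 0)}"
    and lexmax: "\<forall>s\<le>Suc t. is_lexmax n (L s) (zs s)"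
    and step: "\<forall>s\<le>t. \<not> integral_vec n (zs s) \<and>
                  L (Suc s) = L s \<inter> cut_set a (first_nonint (zs s)) (zs s)"
    and nonint_next: "\<not> integral_vec n (zs (Suc t))"
  shows "lex_less n (alpha d n (zs (Suc t))) (alpha d n (zs t))"
proof -
  have L_sub_L0: "s \<le> Suc t \<Longrightarrow> L s \<subseteq> L 0" for s
    by (induction s) (use step in auto)
  have mem: "zs (Suc t) \<in> L (Suc t)" using lexmax unfolding is_lexmax_def by blast
  then have "zs (Suc t) \<in> L t" and cut: "zs (Suc t) \<in> cut_set a (first_nonint (zs t)) (zs t)"
    using step by auto
  then have le: "lex_le n (zs (Suc t)) (zs t)" using lexmax unfolding is_lexmax_def by auto
  have "zs (Suc t) \<in> P" using L_sub_L0[of "Suc t"] mem L0 by auto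
  then have bound: "\<forall>j\<in>{1..n}. zs (Suc t) j \<le> real d" using P_box by blast
  show ?thesis
    using lex_less_alpha_after_cut[OF nonint_next _ le cut bound] step by blast
qed

end
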